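(* Let $\mathcal{A}=\{f\in C^\infty(]0,1[,]0,1[)\mid \lim_{x\to1}f(x)=1,\ \lim_{x\to0}f(x)=0\}$ and $\mathcal{D}=\{f\in\mathcal{A}\mid \inf_{x\in]0,1[}f'(x)>0 \text{ and } \sup_{x\in]0,1[}f'(x)>0\}$, a group under composition, equipped with the Fr\"olicher (diffeological) structure induced from the Fr\'echet space $C^\infty(]0,1[,\mathbb{R})$. Then there exists a smooth path $v$ in $T_{\mathrm{id}}\mathcal{D}$ such that no smooth path $g$ in $\mathcal{D}$ satisfies $\partial_t g\circ g^{-1}=v$.
   Context: $C^\infty(]0,1[,\mathbb{R})$ carries the Fr\'echet topology of the seminorms $\|f\|_{n,k}=\sup_{\frac{1}{n+1}\le x\le\frac{n}{n+1}}|f^{(k)}(x)|$. The smooth maps into $\mathcal{D}$ (plots) are those that are smooth into $C^\infty(]0,1[,\mathbb{R})$ with values in $\mathcal{D}$. $T_{\mathrm{id}}\mathcal{D}$ is the tangent space at the identity, i.e. the set of derivatives at $0$ of smooth paths in $\mathcal{D}$ through $\mathrm{id}$; it is a subset of $C^\infty(]0,1[,\mathbb{R})$. *)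

theory Defs
  imports "HOL-Analysis.Analysis" "HOL-Library.Extended_Real"
begin

abbreviation I01 :: "real set" where "I01 \<equiv> {0<..<1}"

text \<open>Elements of C^infinity(]0,1[,R): real functions all of whose iterated derivatives
  exist on ]0,1[ (values outside ]0,1[ are irrelevant).\<close>
definition smooth01 :: "(real \<Rightarrow> real) \<Rightarrow> bool" where
  "smooth01 f \<longleftrightarrow> (\<forall>k. \<forall>x\<in>I01. ((deriv ^^ k) f) differentiable (at x))"

text \<open>The compact subintervals defining the seminorms
  ||f||_{n,k} = sup over [1/(n+1), n/(n+1)] of |f^(k)|.\<close>
definition K :: "nat \<Rightarrow> real set" where
  "K n = {1 / real (n+1) .. real n / real (n+1)}"

definition frechet_tendsto ::
  "(real \<Rightarrow> real \<Rightarrow> real) \<Rightarrow> (real \<Rightarrow> real) \<Rightarrow> bool" where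
  "frechet_tendsto F G \<longleftrightarrow>
     (\<forall>n k. \<forall>\<epsilon>>0. \<forall>\<^sub>F h in at 0.
        \<forall>x\<in>K n. \<bar>(deriv ^^ k) (F h) x - (deriv ^^ k) G x\<bar> < \<epsilon>)"

definition curve_deriv ::
  "(real \<Rightarrow> real \<Rightarrow> real) \<Rightarrow> (real \<Rightarrow> real) \<Rightarrow> real \<Rightarrow> bool" where
  "curve_deriv c d t \<longleftrightarrow> smooth01 d \<and>
     frechet_tendsto (\<lambda>h x. (c (t + h) x - c t x) / h) d"

definition smooth_curve :: "(real \<Rightarrow> real \<Rightarrow> real) \<Rightarrow> bool" where
  "smooth_curve c \<longleftrightarrow> (\<exists>D :: nat \<Rightarrow> real \<Rightarrow> real \<Rightarrow> real.
     D 0 = c \<and> (\<forall>j t. smooth01 (D j t)) \<and> (\<forall>j t. curve_deriv (D j) (D (Suc j) t) t))"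

definition A_set :: "(real \<Rightarrow> real) set" where
  "A_set = {f. smooth01 f \<and> f ` I01 \<subseteq> I01 \<and>
               (f \<longlongrightarrow> 1) (at_left 1) \<and> (f \<longlongrightarrow> 0) (at_right 0)}"

definition D_set :: "(real \<Rightarrow> real) set" where
  "D_set = {f \<in> A_set. (INF x\<in>I01. ereal (deriv f x)) > 0 \<and>
                        (SUP x\<in>I01. ereal (deriv f x)) > 0}"

definition smooth_path_D :: "(real \<Rightarrow> real \<Rightarrow> real) \<Rightarrow> bool" where
  "smooth_path_D c \<longleftrightarrow> smooth_curve c \<and> (\<forall>t. c t \<in> D_set)"

definition TidD :: "(real \<Rightarrow> real) set" where
  "TidD = {v. \<exists>c. smooth_path_D c \<and> (\<forall>x\<in>I01. c 0 x = x) \<and> curve_deriv c v 0}"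

end

theory Submission
  imports Defs
begin

(*
  The field v(x) = x sqrt(1 - x) / 4, constant in time, is tangent at the identity to the path
  c t x = x + t x (1 - x) / (4 sqrt(1 - x + t^2)); the damping by sqrt(1 - x + t^2) keeps
  the x-derivative of every c t above 3/4, so each c t lies in D.  If a smooth path g in D had
  right logarithmic derivative v, the orbit y t = g t (1/2) would solve y' = v(y) on all of R
  without leaving ]0,1[.  But along such a solution sqrt(1 - y) decreases at rate
  y / 8 >= y(0) / 8 for t >= 0, so it would become negative after time 16 / y(0).

  Smoothness of c as a curve in the Frechet space reduces to joint continuity of all mixed
  partial derivatives.  These are polynomials in t, x and (1 - x + t^2)^(-1/2), a class closed
  under both partial derivatives, so they are generated by formal differentiation of
  expressions.
*)

lemma funpow_deriv_eq:
  fixes f :: "nat \<Rightarrow> real \<Rightarrow> real"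
  assumes "open S"
    and f: "\<And>k x. x \<in> S \<Longrightarrow> (f k has_real_derivative f (Suc k) x) (at x)"
    and "x \<in> S"
  shows "(deriv ^^ k) (f 0) x = f k x"
  using \<open>x \<in> S\<close>
proof (induction k arbitrary: x)
  case (Suc k)
  have "((deriv ^^ k) (f 0) has_real_derivative f (Suc k) x) (at x)"
    by (rule has_field_derivative_transform_within_open[OF f[OF Suc.prems] \<open>open S\<close> Suc.prems])
       (use Suc.IH in simp)
  then show ?case by (simp add: DERIV_imp_deriv)
qed simp

lemma smooth01_if_derivatives:
  fixes f :: "nat \<Rightarrow> real \<Rightarrow> real"
  assumes f: "\<And>k x. x \<in> I01 \<Longrightarrow> (f k has_real_derivative f (Suc k) x) (at x)"
  shows "smooth01 (f 0)"
  unfolding smooth01_def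
proof (intro allI ballI)
  fix k x assume x: "x \<in> I01"
  have "((deriv ^^ k) (f 0) has_real_derivative f (Suc k) x) (at x)"
    by (rule has_field_derivative_transform_within_open[OF f[OF x] open_greaterThanLessThan x])
       (use funpow_deriv_eq[of I01 f, OF open_greaterThanLessThan f] in simp)
  then show "(deriv ^^ k) (f 0) differentiable (at x)"
    using real_differentiable_def by blast
qed

lemma K_subset_I01: "K n \<subseteq> I01"
proof
  fix x assume "x \<in> K n"
  then have "1 / real (n+1) \<le> x" "x \<le> real n / real (n+1)" by (auto simp: K_def)
  moreover have "0 < 1 / real (n+1)" "real n / real (n+1) < 1" by (simp_all add: field_simps)
  ultimately have "0 < x" "x < 1" by linarith+
  then show "x \<in> I01" by simp
qed

lemma I01_covered_by_K:
  assumes "x \<in> I01" obtains n where "x \<in> K n"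
proof -
  obtain n where n: "inverse (real (Suc n)) < min x (1 - x)"
    using reals_Archimedean[of "min x (1 - x)"] assms by auto
  have "real n / real (n + 1) = 1 - inverse (real (Suc n))" by (simp add: field_simps)
  with n have "x \<in> K n" by (auto simp: K_def divide_inverse)
  then show thesis by (rule that)
qed

lemma difference_quotient_uniform:
  fixes G H :: "real \<Rightarrow> real \<Rightarrow> real"
  assumes G: "\<And>t x. x \<in> S \<Longrightarrow> ((\<lambda>t. G t x) has_real_derivative H t x) (at t)"
    and H: "continuous_on (UNIV \<times> S) (\<lambda>(t, x). H t x)"
    and "compact C" "C \<subseteq> S" "e > 0"
  shows "\<forall>\<^sub>F h in at 0. \<forall>x\<in>C. \<bar>(G (t + h) x - G t x) / h - H t x\<bar> < e"
proof -
  have "uniformly_continuous_on (cball t 1 \<times> C) (\<lambda>(t, x). H t x)"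
    using \<open>C \<subseteq> S\<close> by (intro compact_uniformly_continuous compact_Times compact_cball
        \<open>compact C\<close> continuous_on_subset[OF H]) auto
  then obtain d where "d > 0" and d: "\<And>s x. s \<in> cball t 1 \<Longrightarrow> x \<in> C \<Longrightarrow> dist s t < d \<Longrightarrow>
      \<bar>H s x - H t x\<bar> < e / 2"
    using \<open>e > 0\<close> unfolding uniformly_continuous_on_def
    by (drule_tac x="e / 2" in spec) (force simp: dist_Pair_Pair dist_real_def)
  have "\<forall>x\<in>C. \<bar>(G (t + h) x - G t x) / h - H t x\<bar> < e" if h: "h \<noteq> 0" "\<bar>h\<bar> < min d 1" for h
  proof
    fix x assume "x \<in> C"
    have "\<bar>(G (t + h) x - (t + h) * H t x) - (G t x - t * H t x)\<bar> \<le> e / 2 * \<bar>(t + h) - t\<bar>"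
    proof (rule field_differentiable_bound[of "cball t \<bar>h\<bar>", simplified real_norm_def])
      fix s assume s: "s \<in> cball t \<bar>h\<bar>"
      show "((\<lambda>s. G s x - s * H t x) has_real_derivative H s x - H t x) (at s within cball t \<bar>h\<bar>)"
        using \<open>x \<in> C\<close> \<open>C \<subseteq> S\<close>
        by (auto intro!: derivative_eq_intros has_field_derivative_at_within[OF G])
      show "\<bar>H s x - H t x\<bar> \<le> e / 2"
        using d[of s x] s h \<open>x \<in> C\<close> by (force simp: dist_real_def abs_minus_commute)
    qed (auto simp: dist_real_def)
    then have "\<bar>(G (t + h) x - G t x) / h - H t x\<bar> \<le> e / 2"
      using h by (simp add: field_simps)
    then show "\<bar>(G (t + h) x - G t x) / h - H t x\<bar> < e" using \<open>e > 0\<close> by linarith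
  qed
  then show ?thesis
    unfolding eventually_at using \<open>d > 0\<close> by (intro exI[of _ "min d 1"]) (auto simp: dist_real_def)
qed

lemma curve_deriv_of_partials:
  fixes G H :: "nat \<Rightarrow> real \<Rightarrow> real \<Rightarrow> real"
  assumes G_x: "\<And>k t x. x \<in> I01 \<Longrightarrow> ((\<lambda>x. G k t x) has_real_derivative G (Suc k) t x) (at x)"
    and H_x: "\<And>k t x. x \<in> I01 \<Longrightarrow> ((\<lambda>x. H k t x) has_real_derivative H (Suc k) t x) (at x)"
    and G_t: "\<And>k t x. x \<in> I01 \<Longrightarrow> ((\<lambda>t. G k t x) has_real_derivative H k t x) (at t)"
    and H_cont: "\<And>k. continuous_on (UNIV \<times> I01) (\<lambda>(t, x). H k t x)"
  shows "curve_deriv (G 0) (H 0 t) t"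
  unfolding curve_deriv_def frechet_tendsto_def
proof (intro conjI allI impI)
  show "smooth01 (H 0 t)"
    using smooth01_if_derivatives[of "\<lambda>k. H k t"] H_x by simp
  fix n k and e :: real assume "e > 0"
  have "compact (K n)" unfolding K_def by (rule compact_Icc)
  from difference_quotient_uniform[OF G_t H_cont this K_subset_I01 \<open>e > 0\<close>]
  have "\<forall>\<^sub>F h in at 0. h \<noteq> 0 \<and> (\<forall>x\<in>K n. \<bar>(G k (t + h) x - G k t x) / h - H k t x\<bar> < e)"
    by (simp add: eventually_conj_iff eventually_neq_at_within)
  then show "\<forall>\<^sub>F h in at 0. \<forall>x\<in>K n.
      \<bar>(deriv ^^ k) (\<lambda>x. (G 0 (t + h) x - G 0 t x) / h) x - (deriv ^^ k) (H 0 t) x\<bar> < e"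
  proof eventually_elim
    case (elim h)
    have quotient_x: "((\<lambda>x. (G k (t + h) x - G k t x) / h) has_real_derivative
        (G (Suc k) (t + h) x - G (Suc k) t x) / h) (at x)" if "x \<in> I01" for k x
      using that elim by (auto intro!: derivative_eq_intros G_x)
    have "(deriv ^^ k) (\<lambda>x. (G 0 (t + h) x - G 0 t x) / h) x = (G k (t + h) x - G k t x) / h"
      and "(deriv ^^ k) (H 0 t) x = H k t x" if "x \<in> I01" for x
      using funpow_deriv_eq[of I01 "\<lambda>k x. (G k (t + h) x - G k t x) / h", OF _ quotient_x that]
        funpow_deriv_eq[of I01 "\<lambda>k. H k t", OF _ H_x that] by simp_all
    moreover have "x \<in> I01" if "x \<in> K n" for x
      using that K_subset_I01 by blast
    ultimately show ?case using elim by simp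
  qed
qed

lemma smooth_curve_of_partials:
  fixes F :: "nat \<Rightarrow> nat \<Rightarrow> real \<Rightarrow> real \<Rightarrow> real"
  assumes F_x: "\<And>j k t x. x \<in> I01 \<Longrightarrow> ((\<lambda>x. F j k t x) has_real_derivative F j (Suc k) t x) (at x)"
    and F_t: "\<And>j k t x. x \<in> I01 \<Longrightarrow> ((\<lambda>t. F j k t x) has_real_derivative F (Suc j) k t x) (at t)"
    and F_cont: "\<And>j k. continuous_on (UNIV \<times> I01) (\<lambda>(t, x). F j k t x)"
  shows "smooth_curve (F 0 0)"
  unfolding smooth_curve_def
proof (intro exI[of _ "\<lambda>j. F j 0"] conjI allI)
  show "smooth01 (F j 0 t)" for j t
    using smooth01_if_derivatives[of "\<lambda>k. F j k t"] F_x by simp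
  show "curve_deriv (F j 0) (F (Suc j) 0 t) t" for j t
    by (rule curve_deriv_of_partials[of "F j" "F (Suc j)", OF F_x F_x F_t F_cont])
qed simp

lemma smooth_curve_const:
  assumes "smooth01 w"
  shows "smooth_curve (\<lambda>t. w)"
proof -
  have deriv_funpow_zero: "(deriv ^^ k) (\<lambda>x. 0) = (\<lambda>x. 0 :: real)" for k
    by (induction k) auto
  show ?thesis
    unfolding smooth_curve_def
    by (rule exI[of _ "\<lambda>j t. if j = 0 then w else (\<lambda>x. 0)"])
      (use assms in \<open>simp add: smooth01_def curve_deriv_def frechet_tendsto_def deriv_funpow_zero\<close>)
qed

lemma curve_deriv_pointwise:
  assumes "curve_deriv c d t" "x \<in> I01"
  shows "((\<lambda>t. c t x) has_real_derivative d x) (at t)"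
proof -
  obtain n where "x \<in> K n" using I01_covered_by_K[OF assms(2)] .
  have "\<forall>\<^sub>F h in at 0. \<bar>(c (t + h) x - c t x) / h - d x\<bar> < e" if "e > 0" for e
  proof -
    have "\<forall>\<^sub>F h in at 0. \<forall>z\<in>K n.
        \<bar>(deriv ^^ 0) (\<lambda>x. (c (t + h) x - c t x) / h) z - (deriv ^^ 0) d z\<bar> < e"
      using assms(1) that unfolding curve_deriv_def frechet_tendsto_def by blast
    then show ?thesis by eventually_elim (use \<open>x \<in> K n\<close> in simp)
  qed
  then have "((\<lambda>h. (c (t + h) x - c t x) / h) \<longlongrightarrow> d x) (at 0)"
    unfolding tendsto_iff dist_real_def by blast
  then show ?thesis unfolding DERIV_def .
qed

lemma D_setI:
  assumes "f \<in> A_set" "c > 0" "\<And>x. x \<in> I01 \<Longrightarrow> c \<le> deriv f x"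
  shows "f \<in> D_set"
proof -
  have "0 < ereal c" using \<open>c > 0\<close> by simp
  also have "ereal c \<le> (INF x\<in>I01. ereal (deriv f x))"
    using assms(3) by (auto intro: INF_greatest)
  finally have inf: "(INF x\<in>I01. ereal (deriv f x)) > 0" .
  have half: "(1/2 :: real) \<in> I01" by simp
  have "0 < ereal c" using \<open>c > 0\<close> by simp
  also have "ereal c \<le> ereal (deriv f (1/2))" using assms(3)[OF half] by simp
  also have "\<dots> \<le> (SUP x\<in>I01. ereal (deriv f x))" by (rule SUP_upper[OF half])
  finally have "(SUP x\<in>I01. ereal (deriv f x)) > 0" .
  with inf \<open>f \<in> A_set\<close> show ?thesis unfolding D_set_def by simp
qed

lemma D_set_has_real_derivative:
  assumes "f \<in> D_set" "x \<in> I01"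
  shows "(f has_real_derivative deriv f x) (at x)"
proof -
  have "smooth01 f" using assms(1) unfolding D_set_def A_set_def by simp
  then have "((deriv ^^ 0) f) differentiable (at x)" using assms(2) unfolding smooth01_def by blast
  then show ?thesis by (simp add: DERIV_deriv_iff_real_differentiable)
qed

lemma D_set_deriv_pos:
  assumes "f \<in> D_set" "x \<in> I01"
  shows "deriv f x > 0"
proof -
  have "0 < (INF x\<in>I01. ereal (deriv f x))" using assms(1) unfolding D_set_def by simp
  also have "\<dots> \<le> ereal (deriv f x)" by (rule INF_lower[OF assms(2)])
  finally show ?thesis by simp
qed

lemma D_set_inj_on:
  assumes "f \<in> D_set"
  shows "inj_on f I01"
proof -
  have "f a < f b" if "a \<in> I01" "b \<in> I01" "a < b" for a b
  proof (rule DERIV_pos_imp_increasing[OF \<open>a < b\<close>])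
    fix x assume "a \<le> x" "x \<le> b"
    then have "x \<in> I01" using that by auto
    then show "\<exists>y. (f has_real_derivative y) (at x) \<and> y > 0"
      using D_set_has_real_derivative[OF assms] D_set_deriv_pos[OF assms] by blast
  qed
  then show ?thesis by (metis inj_onI linorder_neq_iff order_less_irrefl)
qed

lemma D_set_image: "f \<in> D_set \<Longrightarrow> x \<in> I01 \<Longrightarrow> f x \<in> I01"
  unfolding D_set_def A_set_def by blast

datatype rexp = Const real | Var_t | Var_x | Inv_root | Plus rexp rexp | Times rexp rexp

primrec reval :: "rexp \<Rightarrow> real \<times> real \<Rightarrow> real" where
  "reval (Const c) = (\<lambda>_. c)"
| "reval Var_t = fst"
| "reval Var_x = snd"
| "reval Inv_root = (\<lambda>(t, x). inverse (sqrt (1 - x + t^2)))"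
| "reval (Plus a b) = (\<lambda>p. reval a p + reval b p)"
| "reval (Times a b) = (\<lambda>p. reval a p * reval b p)"

primrec rdiff_t :: "rexp \<Rightarrow> rexp" where
  "rdiff_t (Const c) = Const 0"
| "rdiff_t Var_t = Const 1"
| "rdiff_t Var_x = Const 0"
| "rdiff_t Inv_root = Times (Times (Const (-1)) Var_t) (Times Inv_root (Times Inv_root Inv_root))"
| "rdiff_t (Plus a b) = Plus (rdiff_t a) (rdiff_t b)"
| "rdiff_t (Times a b) = Plus (Times (rdiff_t a) b) (Times a (rdiff_t b))"

primrec rdiff_x :: "rexp \<Rightarrow> rexp" where
  "rdiff_x (Const c) = Const 0"
| "rdiff_x Var_t = Const 0"
| "rdiff_x Var_x = Const 1"
| "rdiff_x Inv_root = Times (Const (1/2)) (Times Inv_root (Times Inv_root Inv_root))"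
| "rdiff_x (Plus a b) = Plus (rdiff_x a) (rdiff_x b)"
| "rdiff_x (Times a b) = Plus (Times (rdiff_x a) b) (Times a (rdiff_x b))"

lemma has_real_derivative_inv_root:
  assumes "x < 1"
  shows "((\<lambda>t. inverse (sqrt (1 - x + t^2))) has_real_derivative
      -t * inverse (sqrt (1 - x + t^2)) ^ 3) (at t)"
    and "((\<lambda>x. inverse (sqrt (1 - x + t^2))) has_real_derivative
      1/2 * inverse (sqrt (1 - x + t^2)) ^ 3) (at x)"
  using assms add_pos_nonneg[of "1 - x" "t^2"]
  by (auto intro!: derivative_eq_intros simp: power3_eq_cube field_simps)

lemma has_real_derivative_reval_t:
  "x < 1 \<Longrightarrow> ((\<lambda>t. reval e (t, x)) has_real_derivative reval (rdiff_t e) (t, x)) (at t)"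
proof (induction e)
  case Inv_root then show ?case
    using has_real_derivative_inv_root(1)[of x t] by (simp add: power3_eq_cube mult.assoc)
qed (auto intro!: derivative_eq_intros)

lemma has_real_derivative_reval_x:
  "x < 1 \<Longrightarrow> ((\<lambda>x. reval e (t, x)) has_real_derivative reval (rdiff_x e) (t, x)) (at x)"
proof (induction e)
  case Inv_root then show ?case
    using has_real_derivative_inv_root(2)[of x t] by (simp add: power3_eq_cube mult.assoc)
qed (auto intro!: derivative_eq_intros)

lemma reval_rdiff_commute: "reval (rdiff_x (rdiff_t e)) (t, x) = reval (rdiff_t (rdiff_x e)) (t, x)"
  by (induction e) (simp_all add: algebra_simps)

lemma reval_rdiff_t_cong:
  assumes "\<And>t. reval a (t, x) = reval b (t, x)" "x < 1"
  shows "reval (rdiff_t a) (t, x) = reval (rdiff_t b) (t, x)"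
  using has_real_derivative_reval_t[OF \<open>x < 1\<close>, of a t] has_real_derivative_reval_t[OF \<open>x < 1\<close>, of b t]
  by (simp add: assms(1) DERIV_unique)

lemma reval_rdiff_x_funpow_t:
  "x < 1 \<Longrightarrow> reval (rdiff_x ((rdiff_t ^^ j) e)) (t, x) = reval ((rdiff_t ^^ j) (rdiff_x e)) (t, x)"
proof (induction j arbitrary: t)
  case (Suc j)
  then show ?case
    using reval_rdiff_t_cong[of "rdiff_x ((rdiff_t ^^ j) e)" x "(rdiff_t ^^ j) (rdiff_x e)"]
    by (simp add: reval_rdiff_commute)
qed simp

lemma continuous_on_reval: "continuous_on (UNIV \<times> {..<1}) (reval e)"
proof -
  have "1 - x + t^2 \<noteq> 0" if "x < 1" for x t :: real
    using that by (smt (verit) zero_le_power2)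
  then show ?thesis
    by (induction e) (auto simp: case_prod_beta intro!: continuous_intros)
qed

definition escape_path :: "real \<Rightarrow> real \<Rightarrow> real" where
  "escape_path t x = x + t * x * (1 - x) / (4 * sqrt (1 - x + t^2))"

text \<open>On \<open>I01\<close> this is \<open>x * sqrt (1 - x) / 4\<close>; the factor \<open>(1 - x) / sqrt (1 - x)\<close> makes it
  equal, as a function on all of \<open>\<real>\<close>, to the derivative of \<open>escape_path\<close> at \<open>t = 0\<close>.\<close>

definition escape_field :: "real \<Rightarrow> real" where
  "escape_field x = x * (1 - x) / (4 * sqrt (1 - x))"

definition escape_rexp :: rexp where
  "escape_rexp = Plus Var_x (Times (Const (1/4))
     (Times Var_t (Times Var_x (Times (Plus (Const 1) (Times (Const (-1)) Var_x)) Inv_root))))"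

definition escape_partial :: "nat \<Rightarrow> nat \<Rightarrow> real \<Rightarrow> real \<Rightarrow> real" where
  "escape_partial j k t x = reval ((rdiff_t ^^ j) ((rdiff_x ^^ k) escape_rexp)) (t, x)"

lemma escape_partial_x:
  "x \<in> I01 \<Longrightarrow> ((\<lambda>x. escape_partial j k t x) has_real_derivative escape_partial j (Suc k) t x) (at x)"
  using has_real_derivative_reval_x[of x "(rdiff_t ^^ j) ((rdiff_x ^^ k) escape_rexp)" t]
    reval_rdiff_x_funpow_t[of x j "(rdiff_x ^^ k) escape_rexp" t]
  by (simp add: escape_partial_def)

lemma escape_partial_t:
  "x \<in> I01 \<Longrightarrow> ((\<lambda>t. escape_partial j k t x) has_real_derivative escape_partial (Suc j) k t x) (at t)"
  using has_real_derivative_reval_t[of x "(rdiff_t ^^ j) ((rdiff_x ^^ k) escape_rexp)" t]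
  by (simp add: escape_partial_def)

lemma continuous_on_escape_partial:
  "continuous_on (UNIV \<times> I01) (\<lambda>(t, x). escape_partial j k t x)"
  unfolding escape_partial_def case_prod_eta
  by (rule continuous_on_subset[OF continuous_on_reval]) auto

lemma escape_partial_0_0: "escape_partial 0 0 = escape_path"
  by (auto simp: fun_eq_iff escape_partial_def escape_rexp_def escape_path_def)
    (simp add: divide_inverse algebra_simps)

lemma escape_partial_1_0: "escape_partial (Suc 0) 0 0 = escape_field"
  by (auto simp: fun_eq_iff escape_partial_def escape_rexp_def escape_field_def)
    (simp add: divide_inverse algebra_simps)

lemma smooth_curve_escape_path: "smooth_curve escape_path"
  using smooth_curve_of_partials[of escape_partial,
      OF escape_partial_x escape_partial_t continuous_on_escape_partial]
  by (simp add: escape_partial_0_0)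

lemma curve_deriv_escape_path: "curve_deriv escape_path escape_field 0"
  using curve_deriv_of_partials[of "escape_partial 0" "escape_partial (Suc 0)", OF escape_partial_x
      escape_partial_x escape_partial_t continuous_on_escape_partial, of 0]
  by (simp add: escape_partial_0_0 escape_partial_1_0)

lemma smooth01_escape_field: "smooth01 escape_field"
  using smooth01_if_derivatives[of "\<lambda>k. escape_partial (Suc 0) k 0", OF escape_partial_x]
  by (simp add: escape_partial_1_0)

lemma inv_root_bounds:
  fixes t x :: real
  assumes "x < 1"
  defines "R \<equiv> inverse (sqrt (1 - x + t^2))"
  shows "0 < R" "\<bar>t\<bar> * R \<le> 1" "(1 - x) * R^2 \<le> 1"
proof -
  have pos: "1 - x + t^2 > 0" using assms by (simp add: add_pos_nonneg)
  then show "0 < R" unfolding R_def by simp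
  have "sqrt (t^2) \<le> sqrt (1 - x + t^2)" using assms by (intro real_sqrt_le_mono) simp
  then show "\<bar>t\<bar> * R \<le> 1" unfolding R_def using pos by (simp add: field_simps)
  have "(1 - x) * R^2 = (1 - x) / (1 - x + t^2)"
    unfolding R_def using pos by (simp add: power_inverse divide_inverse)
  also have "\<dots> \<le> 1" using pos by (simp add: pos_divide_le_eq)
  finally show "(1 - x) * R^2 \<le> 1" .
qed

lemma escape_path_in_I01:
  assumes x: "x \<in> I01"
  shows "escape_path t x \<in> I01"
proof -
  define R where "R = inverse (sqrt (1 - x + t^2))"
  have tR: "\<bar>t * R\<bar> \<le> 1" using inv_root_bounds[of x t] x by (simp add: R_def abs_mult)
  have "\<bar>t * R * (1 - x)\<bar> \<le> 1" "\<bar>t * R * x\<bar> \<le> 1"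
    using mult_mono[OF tR, of "\<bar>1 - x\<bar>" 1] mult_mono[OF tR, of "\<bar>x\<bar>" 1] x
    by (simp_all add: abs_mult)
  then have "0 < 1 + t * R * (1 - x) / 4" "0 < 1 - t * R * x / 4"
    unfolding abs_le_iff by linarith+
  moreover have "escape_path t x = x * (1 + t * R * (1 - x) / 4)"
    and "1 - escape_path t x = (1 - x) * (1 - t * R * x / 4)"
    unfolding escape_path_def divide_inverse inverse_mult_distrib R_def[symmetric] by algebra+
  ultimately have "0 < escape_path t x" "0 < 1 - escape_path t x"
    using x by simp_all
  then show ?thesis by simp
qed

lemma deriv_escape_path_ge:
  assumes x: "x \<in> I01"
  shows "3/4 \<le> deriv (escape_path t) x"
proof -
  define R where "R = inverse (sqrt (1 - x + t^2))"
  note bounds = inv_root_bounds[of x t, folded R_def]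
  have "deriv (escape_path t) x = escape_partial 0 1 t x"
    using DERIV_imp_deriv[OF escape_partial_x[OF x, of 0 0 t]] by (simp add: escape_partial_0_0)
  also have "\<dots> = 1 + t * R * ((1 - 2*x) + x * ((1 - x) * R^2) / 2) / 4"
    by (simp add: escape_partial_def escape_rexp_def flip: R_def) algebra
  finally have deriv_eq:
    "deriv (escape_path t) x = 1 + t * R * ((1 - 2*x) + x * ((1 - x) * R^2) / 2) / 4" .
  have "0 \<le> x * ((1 - x) * R^2)" "x * ((1 - x) * R^2) \<le> x"
    using bounds x by (auto simp: mult_left_le)
  then have "\<bar>(1 - 2*x) + x * ((1 - x) * R^2) / 2\<bar> \<le> 1"
    using x unfolding abs_le_iff greaterThanLessThan_iff by (intro conjI) linarith+
  then have "\<bar>t * R * ((1 - 2*x) + x * ((1 - x) * R^2) / 2)\<bar> \<le> 1"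
    using mult_mono[OF bounds(2)] bounds(1) x by (simp add: abs_mult)
  then show ?thesis unfolding deriv_eq by (simp add: abs_le_iff)
qed

lemma escape_path_tendsto_0: "(escape_path t \<longlongrightarrow> 0) (at_right 0)"
proof -
  have "((\<lambda>x. x + t * x * (1 - x) / (4 * sqrt (1 - x + t^2))) \<longlongrightarrow>
      0 + t * 0 * (1 - 0) / (4 * sqrt (1 - 0 + t^2))) (at_right 0)"
    using add_pos_nonneg[of 1 "t^2"] by (intro tendsto_intros) auto
  then show ?thesis by (simp add: escape_path_def[abs_def])
qed

lemma escape_path_tendsto_1: "(escape_path t \<longlongrightarrow> 1) (at_left 1)"
proof (cases "t = 0")
  case True
  then show ?thesis by (simp add: escape_path_def[abs_def] tendsto_ident_at)
next
  case False
  then have "((\<lambda>x. x + t * x * (1 - x) / (4 * sqrt (1 - x + t^2))) \<longlongrightarrow>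
      1 + t * 1 * (1 - 1) / (4 * sqrt (1 - 1 + t^2))) (at_left 1)"
    by (intro tendsto_intros) auto
  then show ?thesis by (simp add: escape_path_def[abs_def])
qed

lemma escape_path_in_D_set: "escape_path t \<in> D_set"
proof (rule D_setI[where c = "3/4"])
  have "smooth01 (escape_path t)"
    using smooth01_if_derivatives[of "\<lambda>k. escape_partial 0 k t", OF escape_partial_x]
    by (simp add: escape_partial_0_0)
  then show "escape_path t \<in> A_set"
    unfolding A_set_def
    using escape_path_in_I01 escape_path_tendsto_0 escape_path_tendsto_1 by auto
qed (use deriv_escape_path_ge in auto)

lemma escape_field_in_TidD: "escape_field \<in> TidD"
  unfolding TidD_def smooth_path_D_def
  using smooth_curve_escape_path escape_path_in_D_set curve_deriv_escape_path
  by (auto simp: escape_path_def)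

lemma orbit_has_real_derivative:
  assumes "g t \<in> D_set" "curve_deriv g (g' t) t"
    and "\<forall>y\<in>I01. g' t (inv_into I01 (g t) y) = w y" and "x \<in> I01"
  shows "((\<lambda>t. g t x) has_real_derivative w (g t x)) (at t)"
proof -
  have "g' t x = g' t (inv_into I01 (g t) (g t x))"
    using inv_into_f_f[OF D_set_inj_on[OF assms(1)] assms(4)] by simp
  also have "\<dots> = w (g t x)" using assms(3) D_set_image[OF assms(1,4)] by blast
  finally show ?thesis using curve_deriv_pointwise[OF assms(2,4)] by simp
qed

lemma escape_field_no_global_orbit:
  assumes y': "\<And>t. (y has_real_derivative escape_field (y t)) (at t)" and y: "\<And>t. y t \<in> I01"
  shows False
proof -
  define y0 where "y0 = y 0"
  have "0 < y0" using y[of 0] by (simp add: y0_def)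
  have field_pos: "escape_field (y t) > 0" for t
    using y[of t] by (simp add: escape_field_def)
  have y0_le: "y0 \<le> y t" if "t \<ge> 0" for t
  proof (cases "t = 0")
    case False
    with that have "0 < t" by simp
    then have "y 0 < y t"
      by (rule DERIV_pos_imp_increasing) (use y' field_pos in blast)
    then show ?thesis by (simp add: y0_def)
  qed (simp add: y0_def)
  define L where "L t = sqrt (1 - y t) + y0 / 8 * t" for t
  have L': "(L has_real_derivative (y0 - y t) / 8) (at t)" for t
  proof -
    have pos: "1 - y t > 0" using y[of t] by simp
    have "((\<lambda>s. 1 - y s) has_real_derivative - escape_field (y t)) (at t)"
      using DERIV_diff[OF DERIV_const y'[of t]] by simp
    then have "((\<lambda>s. sqrt (1 - y s)) has_real_derivative
        inverse (sqrt (1 - y t)) / 2 * (- escape_field (y t))) (at t)"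
      by (rule DERIV_chain2[of sqrt _ "\<lambda>s. 1 - y s", OF DERIV_real_sqrt[OF pos]])
    then have deriv: "(L has_real_derivative
        inverse (sqrt (1 - y t)) / 2 * (- escape_field (y t)) + y0 / 8 * 1) (at t)"
      unfolding L_def[abs_def] by (intro DERIV_add DERIV_cmult DERIV_ident)
    have rate: "inverse (sqrt (1 - y t)) / 2 * (- escape_field (y t)) + y0 / 8 * 1 = (y0 - y t) / 8"
      using pos by (simp add: escape_field_def field_simps)
    show ?thesis using deriv unfolding rate .
  qed
  define T where "T = 16 / y0"
  have "T \<ge> 0" using \<open>0 < y0\<close> by (simp add: T_def)
  have "L T \<le> L 0"
  proof (rule DERIV_nonpos_imp_nonincreasing[OF \<open>T \<ge> 0\<close>])
    fix s :: real assume "0 \<le> s"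
    then show "\<exists>d. (L has_real_derivative d) (at s) \<and> d \<le> 0"
      using L'[of s] y0_le[of s] by auto
  qed
  moreover have "L 0 \<le> 1" using y[of 0] by (simp add: L_def)
  moreover have "L T \<ge> 2" using \<open>0 < y0\<close> y[of T] by (simp add: L_def T_def)
  ultimately show False by simp
qed

theorem theorem8p4:
  shows "\<exists>v. smooth_curve v \<and> (\<forall>t. v t \<in> TidD) \<and>
           \<not> (\<exists>g g'. smooth_path_D g \<and> (\<forall>t. curve_deriv g (g' t) t) \<and>
                 (\<forall>t. \<forall>x\<in>I01. g' t (inv_into I01 (g t) x) = v t x))"
proof (intro exI[of _ "\<lambda>t. escape_field"] conjI allI notI)
  show "smooth_curve (\<lambda>t. escape_field)" by (rule smooth_curve_const[OF smooth01_escape_field])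
  show "escape_field \<in> TidD" by (rule escape_field_in_TidD)
  assume "\<exists>g g'. smooth_path_D g \<and> (\<forall>t. curve_deriv g (g' t) t) \<and>
      (\<forall>t. \<forall>x\<in>I01. g' t (inv_into I01 (g t) x) = escape_field x)"
  then obtain g g' where g: "\<And>t. g t \<in> D_set" and g': "\<And>t. curve_deriv g (g' t) t"
    and flow: "\<And>t. \<forall>x\<in>I01. g' t (inv_into I01 (g t) x) = escape_field x"
    unfolding smooth_path_D_def by blast
  have "((\<lambda>t. g t (1/2)) has_real_derivative escape_field (g t (1/2))) (at t)" for t
    by (rule orbit_has_real_derivative[OF g g' flow]) simp
  moreover have "g t (1/2) \<in> I01" for t by (rule D_set_image[OF g]) simp
  ultimately show False by (rule escape_field_no_global_orbit)
qed

end
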